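(* Let $n\ge 6$ be an even integer not divisible by $4$, and let $A=[a_{ij}]$ be the $n\times n$ matrix produced by the singly even construction described in the context. Then $\sum_{i=1}^n a_{ii} = \frac{n(n^2+1)}{2}$ and $\sum_{i=1}^n a_{i,n-i+1} = \frac{n(n^2+1)}{2}$.
   Context: Siamese method for odd $p$: produce a $p\times p$ matrix $S$ containing $1,\dots,p^2$ by placing $1$ at position $(1,\frac{p+1}{2})$, and for $k=1,\dots,p^2-1$, if $k$ is at $(i,j)$, place $k+1$ at the cell one row up and one column right, wrapping cyclically (row $0$ means row $p$, column $p+1$ means column $1$), unless that cell is already occupied or $(i,j)=(1,p)$, in which case place $k+1$ at $(i+1,j)$. Singly even construction: let $p=n/2$ (odd), $m=\frac{n-2}{4}$, $q=\frac{n-6}{4}$. For $\ell=1,\dots,4$ let $A^\ell = S + (\ell-1)\frac{n^2}{4}J$ with $J$ the all-ones $p\times p$ matrix, and form $\begin{bmatrix} A^1 & A^3\\ A^4 & A^2\end{bmatrix}$. Let $T = \{(i,j): i\in\{1,\dots,m\}\cup\{m+2,\dots,p\},\ j\in\{1,\dots,m\}\}\cup\{(m+1,j): j\in\{m+1,\dots,2m\}\}$. Then: (1) for every $(i,j)\in T$ exchange $A^1_{ij}$ and $A^4_{ij}$; (2) for every $i\in\{1,\dots,p\}$ and $j\in\{p-q+1,\dots,p\}$ exchange $A^3_{ij}$ and $A^2_{ij}$. The resulting $n\times n$ matrix is $A$. *)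

theory Defs
  imports Main
begin

text \<open>Siamese method for odd p. Rows and columns are 1-based.
  siamese_positions p k is the list of the cells holding 1, ..., k
  (entry number t-1 of the list is the cell of t).\<close>

fun siamese_positions :: "nat \<Rightarrow> nat \<Rightarrow> (nat \<times> nat) list" where
  "siamese_positions p 0 = []"
| "siamese_positions p (Suc k) =
     (let ps = siamese_positions p k in
      if k = 0 then [(1, (p + 1) div 2)]
      else (let (i, j) = last ps;
                c = (if i = 1 then p else i - 1, if j = p then 1 else j + 1)
            in if c \<in> set ps \<or> (i, j) = (1, p) then ps @ [(i + 1, j)] else ps @ [c]))"

definition siamese :: "nat \<Rightarrow> nat \<Rightarrow> nat \<Rightarrow> nat" where
  "siamese p i j =
     (THE k. 1 \<le> k \<and> k \<le> p\<^sup>2 \<and> siamese_positions p (p\<^sup>2) ! (k - 1) = (i, j))"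

definition swapT :: "nat \<Rightarrow> (nat \<times> nat) set" where
  "swapT n = (let p = n div 2; m = (n - 2) div 4 in
     {(i, j). (i \<in> {1..m} \<union> {m+2..p}) \<and> j \<in> {1..m}} \<union> {(m + 1, j) | j. j \<in> {m+1..2*m}})"

definition blockA :: "nat \<Rightarrow> nat \<Rightarrow> nat \<Rightarrow> nat \<Rightarrow> nat" where
  "blockA n l i j = siamese (n div 2) i j + (l - 1) * (n\<^sup>2 div 4)"

text \<open>The singly even magic square A (entries (i,j), 1 \<le> i,j \<le> n), built from
  [A1 A3; A4 A2] with the two exchanges.\<close>
definition singly_even :: "nat \<Rightarrow> nat \<Rightarrow> nat \<Rightarrow> nat" where
  "singly_even n i j =
    (let p = n div 2; q = (n - 6) div 4; T = swapT n in
     if i \<le> p \<and> j \<le> p then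
       (if (i, j) \<in> T then blockA n 4 i j else blockA n 1 i j)
     else if i \<le> p then
       (if p - q + 1 \<le> j - p then blockA n 2 i (j - p) else blockA n 3 i (j - p))
     else if j \<le> p then
       (if (i - p, j) \<in> T then blockA n 1 (i - p) j else blockA n 4 (i - p) j)
     else
       (if p - q + 1 \<le> j - p then blockA n 3 (i - p) (j - p) else blockA n 2 (i - p) (j - p)))"

end

theory Submission
  imports Defs
begin

(* Write k = a p + b with 0 <= b < p and c = (p - 1) / 2. The Siamese method puts k + 1 in
   the cell with 0-based coordinates (2a - b, c - a + b) mod p: each run of p numbers climbs
   a broken up-right diagonal, and the next run starts one row below where it ended. Inverting this closed form,
   the entries in the centrally symmetric cells (r, s) and (p + 1 - r, p + 1 - s) always add up
   to p^2 + 1, so both diagonals of S sum to p (p^2 + 1) / 2. In A every diagonal entry is the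
   matching entry of S plus a multiple of p^2 determined by its quadrant and the exchanges;
   counting shows that these multiples total 3 p along either diagonal, and
   2 p (p^2 + 1) / 2 + 3 p p^2 = n (n^2 + 1) / 2. *)

definition cyc :: "nat \<Rightarrow> int \<Rightarrow> nat" where
  "cyc p x = nat (x mod int p) + 1"

lemma cyc_eq_iff: "p > 0 \<Longrightarrow> cyc p x = cyc p y \<longleftrightarrow> int p dvd x - y"
  by (auto simp: cyc_def mod_eq_dvd_iff[symmetric] nat_eq_iff2)

lemma cyc_of_nat: "x < p \<Longrightarrow> cyc p (int x) = x + 1"
  by (simp add: cyc_def)

lemma cyc_eq_top_iff: "p > 0 \<Longrightarrow> cyc p x = p \<longleftrightarrow> int p dvd x + 1"
proof -
  assume "p > 0"
  then have "cyc p (-1) = p" by (simp add: cyc_def zmod_minus1)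
  with \<open>p > 0\<close> show ?thesis by (metis cyc_eq_iff diff_minus_eq_add)
qed

lemma cyc_succ: "p > 0 \<Longrightarrow> cyc p (x + 1) = (if cyc p x = p then 1 else cyc p x + 1)"
proof -
  assume p: "p > 0"
  define s where "s = x mod int p"
  have s: "0 \<le> s" "s < int p" using p by (simp_all add: s_def)
  have "(x + 1) mod int p = (s + 1) mod int p" by (simp add: s_def mod_add_left_eq)
  also have "\<dots> = (if s + 1 = int p then 0 else s + 1)" using s by auto
  finally show ?thesis using s by (auto simp: cyc_def s_def[symmetric] nat_add_distrib)
qed

lemma cyc_pred: "p > 0 \<Longrightarrow> cyc p (x - 1) = (if cyc p x = 1 then p else cyc p x - 1)"
  using cyc_succ[of p "x - 1"] by (auto simp: cyc_def)

text \<open>The cell receiving the number k + 1.\<close>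

definition siamese_cell :: "nat \<Rightarrow> nat \<Rightarrow> nat \<times> nat" where
  "siamese_cell p k =
     (cyc p (2 * int (k div p) - int (k mod p)),
      cyc p (int ((p - 1) div 2) - int (k div p) + int (k mod p)))"

lemma siamese_cell_eq:
  "b < p \<Longrightarrow> siamese_cell p (a * p + b) =
     (cyc p (2 * int a - int b), cyc p (int ((p - 1) div 2) - int a + int b))"
  by (simp add: siamese_cell_def)

lemma inj_on_siamese_cell: "p > 0 \<Longrightarrow> inj_on (siamese_cell p) {..<p\<^sup>2}"
proof (rule inj_onI)
  fix k k' assume p: "p > 0" and k: "k \<in> {..<p\<^sup>2}" "k' \<in> {..<p\<^sup>2}"
    and eq: "siamese_cell p k = siamese_cell p k'"
  define a b a' b' where "a = int (k div p)" and "b = int (k mod p)"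
    and "a' = int (k' div p)" and "b' = int (k' mod p)"
  have range: "0 \<le> a" "a < int p" "0 \<le> b" "b < int p" "0 \<le> a'" "a' < int p" "0 \<le> b'" "b' < int p"
    using p k by (auto simp: a_def b_def a'_def b'_def power2_eq_square less_mult_imp_div_less)
  have row: "int p dvd (2 * a - b) - (2 * a' - b')" and col: "int p dvd (- a + b) - (- a' + b')"
    using eq p by (auto simp: siamese_cell_def cyc_eq_iff a_def b_def a'_def b'_def algebra_simps)
  have "int p dvd ((2 * a - b) - (2 * a' - b')) + ((- a + b) - (- a' + b'))"
    using row col by (rule dvd_add)
  then have da: "int p dvd a - a'" by (simp add: algebra_simps)
  have "int p dvd ((- a + b) - (- a' + b')) + (a - a')"
    using col da by (rule dvd_add)
  then have "int p dvd b - b'" by (simp add: algebra_simps)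
  with da have "a = a'" "b = b'" using range by (metis mod_eq_dvd_iff mod_pos_pos_trivial)+
  then show "k = k'" unfolding a_def a'_def b_def b'_def by (metis div_mult_mod_eq of_nat_eq_iff)
qed

definition up_right :: "nat \<Rightarrow> nat \<times> nat \<Rightarrow> nat \<times> nat" where
  "up_right p c = (if fst c = 1 then p else fst c - 1, if snd c = p then 1 else snd c + 1)"

lemma siamese_positions_Suc:
  assumes "k > 0" and "last (siamese_positions p k) = c"
  shows "siamese_positions p (Suc k) =
    (let ps = siamese_positions p k in
     if up_right p c \<in> set ps \<or> c = (1, p) then ps @ [(fst c + 1, snd c)] else ps @ [up_right p c])"
  using assms by (cases c) (simp add: up_right_def Let_def)

lemma up_right_cyc: "p > 0 \<Longrightarrow> up_right p (cyc p x, cyc p y) = (cyc p (x - 1), cyc p (y + 1))"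
  by (simp add: up_right_def cyc_pred cyc_succ)

lemma up_right_siamese_cell:
  "b + 1 < p \<Longrightarrow> up_right p (siamese_cell p (a * p + b)) = siamese_cell p (a * p + b + 1)"
  using siamese_cell_eq[of b p a] siamese_cell_eq[of "b + 1" p a]
  by (simp add: up_right_cyc algebra_simps)

lemma up_right_siamese_cell_row_end:
  "p > 0 \<Longrightarrow> up_right p (siamese_cell p (a * p + (p - 1))) = siamese_cell p (a * p)"
  using siamese_cell_eq[of "p - 1" p a] siamese_cell_eq[of 0 p a]
  by (simp add: up_right_cyc cyc_eq_iff)

lemma siamese_cell_row_start:
  assumes "odd p" and "a + 1 < p"
  shows "siamese_cell p ((a + 1) * p) =
    (fst (siamese_cell p (a * p + (p - 1))) + 1, snd (siamese_cell p (a * p + (p - 1))))"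
proof -
  have p: "p > 0" using assms by presburger
  have "\<not> p dvd 2 * a + 2"
  proof
    assume "p dvd 2 * a + 2"
    then obtain e where e: "2 * a + 2 = p * e" by blast
    with assms(2) have "p * e < p * 2" by linarith
    then have "e < 2" by simp
    with e have "2 * a + 2 = p" by (cases e) auto
    with assms(1) show False by presburger
  qed
  then have "cyc p (2 * int a + 1) \<noteq> p"
    by (simp add: cyc_eq_top_iff[OF p] add.assoc add.commute flip: int_dvd_int_iff)
  then have "cyc p (2 * int a + 2) = cyc p (2 * int a + 1) + 1"
    using cyc_succ[OF p, of "2 * int a + 1"] by (simp add: add.assoc)
  moreover have "cyc p (2 * int a - int (p - 1)) = cyc p (2 * int a + 1)"
    "cyc p (int ((p - 1) div 2) - int a + int (p - 1)) = cyc p (int ((p - 1) div 2) - (int a + 1))"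
    using p by (simp_all add: cyc_eq_iff)
  ultimately show ?thesis
    using siamese_cell_eq[of "p - 1" p a] siamese_cell_eq[of 0 p "a + 1"] p by (simp add: algebra_simps)
qed

lemma siamese_cell_eq_corner:
  assumes "odd p" and "k < p\<^sup>2" and "siamese_cell p k = (1, p)"
  shows "k mod p = p - 1"
proof -
  have p: "p > 0" using assms by presburger
  define c where "c = (p - 1) div 2"
  have c: "2 * c = p - 1" using assms(1) by (simp add: c_def)
  have "c * p + (p - 1) < p\<^sup>2"
  proof -
    have "(c + 1) * p \<le> p * p" using c p by (intro mult_le_mono1) linarith
    then show ?thesis using p by (simp add: power2_eq_square)
  qed
  moreover have "siamese_cell p (c * p + (p - 1)) = (1, p)"
    using siamese_cell_eq[of "p - 1" p c] c p by (simp add: cyc_def zmod_minus1 flip: c_def)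
  ultimately have "k = c * p + (p - 1)"
    using inj_on_siamese_cell[OF p] assms(2,3) by (metis inj_onD lessThan_iff)
  then show ?thesis using p by (simp only: mod_mult_self3 mod_less diff_less zero_less_one)
qed

lemma siamese_cell_0:
  assumes "odd p"
  shows "siamese_cell p 0 = (1, (p + 1) div 2)"
proof -
  have "(p - 1) div 2 < p" "(p + 1) div 2 = (p - 1) div 2 + 1" using assms by presburger+
  then show ?thesis by (simp add: siamese_cell_def cyc_def)
qed

lemma siamese_cell_notin_prefix:
  "p > 0 \<Longrightarrow> k < p\<^sup>2 \<Longrightarrow> siamese_cell p k \<notin> set (map (siamese_cell p) [0..<k])"
  using inj_on_siamese_cell[of p] by (auto dest: inj_onD)

lemma siamese_positions_Suc_eq:
  assumes "odd p" and "0 < k" and "k < p\<^sup>2"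
    and IH: "siamese_positions p k = map (siamese_cell p) [0..<k]"
  shows "siamese_positions p (Suc k) = map (siamese_cell p) [0..<Suc k]"
proof -
  have p: "p > 0" using assms by presburger
  define a b where "a = (k - 1) div p" and "b = (k - 1) mod p"
  have k: "k = a * p + b + 1" and "b < p" using p \<open>0 < k\<close> by (simp_all add: a_def b_def)
  have last: "last (siamese_positions p k) = siamese_cell p (a * p + b)"
    using assms(2) IH k by (simp add: last_map)
  consider "b + 1 < p" | "b = p - 1" using \<open>b < p\<close> by linarith
  then show ?thesis
  proof cases
    case 1
    have "siamese_cell p (a * p + b) \<noteq> (1, p)"
      using siamese_cell_eq_corner[OF assms(1), of "a * p + b"] assms(3) k 1 by auto
    moreover have "up_right p (siamese_cell p (a * p + b)) = siamese_cell p k"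
      using up_right_siamese_cell[OF 1] k by simp
    ultimately show ?thesis
      using siamese_positions_Suc[OF assms(2) last] siamese_cell_notin_prefix[OF p assms(3)] IH
      by simp
  next
    case 2
    have k': "k = (a + 1) * p" using k 2 p by simp
    then have "(a + 1) * p < p * p" using assms(3) by (simp add: power2_eq_square)
    then have "a + 1 < p" by (metis mult_less_cancel2)
    have "up_right p (siamese_cell p (a * p + b)) \<in> set (map (siamese_cell p) [0..<k])"
      using up_right_siamese_cell_row_end[OF p, of a] 2 k' p by simp
    then show ?thesis
      using siamese_positions_Suc[OF assms(2) last] siamese_cell_row_start[OF assms(1) \<open>a + 1 < p\<close>]
        IH 2 k' by simp
  qed
qed

lemma siamese_positions_eq:
  "odd p \<Longrightarrow> k \<le> p\<^sup>2 \<Longrightarrow> siamese_positions p k = map (siamese_cell p) [0..<k]"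
proof (induction k)
  case (Suc k)
  show ?case
  proof (cases "k = 0")
    case True
    then show ?thesis using siamese_cell_0[OF Suc.prems(1)] by simp
  next
    case False
    then show ?thesis using siamese_positions_Suc_eq Suc by simp
  qed
qed simp

text \<open>Inverse of \<^const>\<open>siamese_cell\<close> in 0-based coordinates: cell (r + 1, s + 1)
  receives the number \<^term>\<open>siamese_index p r s + 1\<close>.\<close>

definition siamese_index :: "nat \<Rightarrow> nat \<Rightarrow> nat \<Rightarrow> nat" where
  "siamese_index p r s =
     p * nat ((int r + int s - int ((p - 1) div 2)) mod int p)
     + nat ((int r + 2 * int s - 2 * int ((p - 1) div 2)) mod int p)"

lemma siamese_index_less: "p > 0 \<Longrightarrow> siamese_index p r s < p\<^sup>2"
proof -
  assume p: "p > 0"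
  define x y where "x = nat ((int r + int s - int ((p - 1) div 2)) mod int p)"
    and "y = nat ((int r + 2 * int s - 2 * int ((p - 1) div 2)) mod int p)"
  have "x < p" "y < p" using p by (simp_all add: x_def y_def nat_less_iff)
  then have "p * x + y < p * (x + 1)" by simp
  also have "\<dots> \<le> p * p" using \<open>x < p\<close> by (intro mult_le_mono2) simp
  finally show ?thesis unfolding siamese_index_def power2_eq_square x_def y_def .
qed

lemma siamese_cell_index:
  assumes "p > 0" and "r < p" and "s < p"
  shows "siamese_cell p (siamese_index p r s) = (r + 1, s + 1)"
proof -
  define c where "c = int ((p - 1) div 2)"
  define x y where "x = int r + int s - c" and "y = int r + 2 * int s - 2 * c"
  have "siamese_cell p (siamese_index p r s) =
      (cyc p (2 * (x mod int p) - y mod int p), cyc p (c - x mod int p + y mod int p))"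
    using siamese_cell_eq[of "nat (y mod int p)" p "nat (x mod int p)"] assms(1)
    by (simp add: siamese_index_def x_def y_def c_def nat_less_iff mult.commute)
  also have "\<dots> = (cyc p (int r), cyc p (int s))"
  proof -
    have dx: "int p dvd x mod int p - x" and dy: "int p dvd y mod int p - y"
      by (simp_all add: mod_eq_dvd_iff[symmetric])
    have "int p dvd 2 * (x mod int p - x) - (y mod int p - y)"
      using dx dy by (metis dvd_diff dvd_mult)
    moreover have "int p dvd (y mod int p - y) - (x mod int p - x)"
      using dy dx by (rule dvd_diff)
    ultimately show ?thesis
      using assms(1) by (simp add: cyc_eq_iff x_def y_def algebra_simps)
  qed
  finally show ?thesis using assms by (simp add: cyc_of_nat)
qed

lemma siamese_eq_index:
  assumes "odd p" and "r < p" and "s < p"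
  shows "siamese p (r + 1) (s + 1) = siamese_index p r s + 1"
proof -
  have p: "p > 0" using assms by presburger
  let ?k = "siamese_index p r s"
  have cells: "siamese_positions p (p\<^sup>2) = map (siamese_cell p) [0..<p\<^sup>2]"
    using siamese_positions_eq[OF assms(1)] by simp
  show ?thesis
    unfolding siamese_def cells
  proof (rule the_equality)
    show "1 \<le> ?k + 1 \<and> ?k + 1 \<le> p\<^sup>2 \<and> map (siamese_cell p) [0..<p\<^sup>2] ! (?k + 1 - 1) = (r + 1, s + 1)"
      using siamese_index_less[OF p, of r s] siamese_cell_index[OF p assms(2,3)] by simp
  next
    fix k assume k: "1 \<le> k \<and> k \<le> p\<^sup>2 \<and> map (siamese_cell p) [0..<p\<^sup>2] ! (k - 1) = (r + 1, s + 1)"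
    then have "k - 1 < p\<^sup>2" by linarith
    with k have "siamese_cell p (k - 1) = siamese_cell p ?k"
      using siamese_cell_index[OF p assms(2,3)] by simp
    then have "k - 1 = ?k"
      using inj_onD[OF inj_on_siamese_cell[OF p]] siamese_index_less[OF p] \<open>k - 1 < p\<^sup>2\<close> by simp
    with k show "k = ?k + 1" by linarith
  qed
qed

lemma mod_add_mod_eq_pred:
  fixes x y p :: int
  assumes "p > 0" and "x + y = p - 1"
  shows "x mod p + y mod p = p - 1"
proof -
  define u where "u = x mod p + y mod p"
  have u_mod: "u mod p = p - 1"
    using assms by (simp add: u_def mod_add_eq zmod_minus1)
  have "0 \<le> u" "u < 2 * p - 1"
    using assms(1) pos_mod_bound[of p x] pos_mod_bound[of p y] pos_mod_sign[of p x] pos_mod_sign[of p y]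
    unfolding u_def by linarith+
  show ?thesis
  proof (cases "u < p")
    case True
    then show ?thesis using u_mod \<open>0 \<le> u\<close> by (simp add: u_def[symmetric])
  next
    case False
    have "u - p = (u - p) mod p"
      using False \<open>u < 2 * p - 1\<close> by (intro mod_pos_pos_trivial[symmetric]) auto
    also have "\<dots> = u mod p" by (metis mod_add_self2 diff_add_cancel)
    finally show ?thesis using \<open>u < 2 * p - 1\<close> u_mod by simp
  qed
qed

lemma siamese_index_antipodal:
  assumes "odd p" and "r < p" and "s < p"
  shows "siamese_index p r s + siamese_index p (p - 1 - r) (p - 1 - s) = p\<^sup>2 - 1"
proof -
  have p: "int p > 0" using assms by presburger
  define c where "c = int ((p - 1) div 2)"
  have c: "2 * c = int p - 1" using assms(1) by (simp add: c_def) presburger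
  define x x' y y' where "x = int r + int s - c" and "x' = int (p - 1 - r) + int (p - 1 - s) - c"
    and "y = int r + 2 * int s - 2 * c" and "y' = int (p - 1 - r) + 2 * int (p - 1 - s) - 2 * c"
  have "x + x' = int p - 1" "y + y' = int p - 1"
    using assms(2,3) c by (simp_all add: x_def x'_def y_def y'_def)
  then have xs: "x mod int p + x' mod int p = int p - 1" and ys: "y mod int p + y' mod int p = int p - 1"
    using p by (simp_all add: mod_add_mod_eq_pred)
  have "int (siamese_index p r s) = int p * (x mod int p) + y mod int p"
    "int (siamese_index p (p - 1 - r) (p - 1 - s)) = int p * (x' mod int p) + y' mod int p"
    using p by (simp_all add: siamese_index_def x_def x'_def y_def y'_def c_def)
  then have "int (siamese_index p r s + siamese_index p (p - 1 - r) (p - 1 - s))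
      = int p * (x mod int p + x' mod int p) + (y mod int p + y' mod int p)"
    by (simp add: algebra_simps)
  also have "\<dots> = int p * (int p - 1) + (int p - 1)" unfolding xs ys ..
  also have "\<dots> = int (p\<^sup>2 - 1)" using p by (simp add: power2_eq_square algebra_simps)
  finally show ?thesis by (simp only: of_nat_eq_iff)
qed

lemma siamese_antipodal:
  assumes "odd p" and "r < p" and "s < p"
  shows "siamese p (r + 1) (s + 1) + siamese p (p - r) (p - s) = p\<^sup>2 + 1"
proof -
  have "p - r = (p - 1 - r) + 1" "p - s = (p - 1 - s) + 1" "p - 1 - r < p" "p - 1 - s < p"
    using assms(2,3) by simp_all
  then have "siamese p (r + 1) (s + 1) + siamese p (p - r) (p - s)
      = siamese_index p r s + siamese_index p (p - 1 - r) (p - 1 - s) + 2"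
    using siamese_eq_index[OF assms] siamese_eq_index[OF assms(1)] by simp
  also have "\<dots> = p\<^sup>2 + 1"
    using siamese_index_antipodal[OF assms] assms(2) by simp
  finally show ?thesis .
qed

lemma siamese_sum_centrally_symmetric:
  assumes "odd p"
    and line: "\<And>t. t < p \<Longrightarrow> r t < p \<and> s t < p
          \<and> r (p - 1 - t) = p - 1 - r t \<and> s (p - 1 - t) = p - 1 - s t"
  shows "2 * (\<Sum>t<p. siamese p (r t + 1) (s t + 1)) = p * (p\<^sup>2 + 1)"
proof -
  let ?f = "\<lambda>t. siamese p (r t + 1) (s t + 1)"
  have "(\<Sum>t<p. ?f t) = (\<Sum>t<p. ?f (p - Suc t))" by (rule sum.nat_diff_reindex[symmetric])
  then have "2 * (\<Sum>t<p. ?f t) = (\<Sum>t<p. ?f t + ?f (p - 1 - t))" by (simp add: sum.distrib)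
  also have "\<dots> = (\<Sum>t<p. p\<^sup>2 + 1)"
  proof (rule sum.cong)
    fix t assume "t \<in> {..<p}"
    then have "t < p" by simp
    with line[of t] siamese_antipodal[OF assms(1), of "r t" "s t"] show "?f t + ?f (p - 1 - t) = p\<^sup>2 + 1"
      by (simp add: Suc_diff_Suc)
  qed simp
  finally show ?thesis by simp
qed

lemma siamese_diagonal_sum: "odd p \<Longrightarrow> 2 * (\<Sum>t<p. siamese p (t + 1) (t + 1)) = p * (p\<^sup>2 + 1)"
  using siamese_sum_centrally_symmetric[of p id id] by simp

lemma siamese_antidiagonal_sum:
  assumes "odd p"
  shows "2 * (\<Sum>t<p. siamese p (t + 1) (p - t)) = p * (p\<^sup>2 + 1)"
proof -
  have "(\<Sum>t<p. siamese p (t + 1) (p - t)) = (\<Sum>t<p. siamese p (t + 1) (p - 1 - t + 1))"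
    by (intro sum.cong) (auto simp: Suc_diff_Suc)
  then show ?thesis using siamese_sum_centrally_symmetric[OF assms, of id "\<lambda>t. p - 1 - t"] by simp
qed


lemma sum_lessThan_add: "(\<Sum>i<a + b. f i) = (\<Sum>i<a. f i) + (\<Sum>i<b. f (a + i))" for b :: nat
  by (induction b) (simp_all add: add.assoc)

lemma sum_lessThan_if_less:
  fixes x y :: "'a :: comm_semiring_1"
  assumes "k \<le> p"
  shows "(\<Sum>t<p. if t < k then x else y) = of_nat k * x + of_nat (p - k) * y"
proof -
  have "{..<p} \<inter> {t. t < k} = {..<k}" "{..<p} \<inter> - {t. t < k} = {k..<p}" using assms by auto
  then show ?thesis by (simp add: sum.If_cases)
qed

lemma sum_halves_weighted:
  fixes f g w w' :: "nat \<Rightarrow> nat"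
  assumes "\<And>t. t < p \<Longrightarrow> f (t + 1) = g t + w t * N"
    and "\<And>t. t < p \<Longrightarrow> f (p + t + 1) = g t + w' t * N"
  shows "(\<Sum>i = 1..2 * p. f i) = 2 * (\<Sum>t<p. g t) + ((\<Sum>t<p. w t) + (\<Sum>t<p. w' t)) * N"
proof -
  have "(\<Sum>i = 1..2 * p. f i) = (\<Sum>t<p. f (t + 1)) + (\<Sum>t<p. f (p + t + 1))"
    by (simp add: sum.atLeast1_atMost_eq sum_lessThan_add mult_2)
  also have "\<dots> = (\<Sum>t<p. g t + w t * N) + (\<Sum>t<p. g t + w' t * N)"
    using assms by (intro arg_cong2[where f = "(+)"] sum.cong) auto
  also have "\<dots> = 2 * (\<Sum>t<p. g t) + ((\<Sum>t<p. w t) + (\<Sum>t<p. w' t)) * N"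
    by (simp add: sum.distrib sum_distrib_right add_mult_distrib)
  finally show ?thesis .
qed

text \<open>In the notation of the construction: \<open>n = 4 m + 2\<close>, \<open>p = n / 2\<close> and \<open>q = m - 1\<close>;
  the column condition \<open>m + 3 \<le> j\<close> below is \<open>j \<ge> p - q + 1\<close>.\<close>

context
  fixes m n p :: nat
  assumes m: "1 \<le> m" and n: "n = 4 * m + 2" and p: "p = 2 * m + 1"
begin

lemma singly_even_half: "n div 2 = p"
  by (simp add: n p)

lemma singly_even_blockA: "blockA n l i j = siamese p i j + (l - 1) * p\<^sup>2"
proof -
  have "n\<^sup>2 div 4 = p\<^sup>2" by (simp add: n p power2_eq_square algebra_simps)
  then show ?thesis by (simp add: blockA_def singly_even_half)
qed

lemma singly_even_swapT_iff:
  "(i, j) \<in> swapT n \<longleftrightarrow> (i \<in> {1..m} \<union> {m + 2..p} \<and> j \<in> {1..m})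
    \<or> (i = m + 1 \<and> j \<in> {m + 1..2 * m})"
proof -
  have "(n - 2) div 4 = m" by (simp add: n)
  then show ?thesis by (auto simp: swapT_def Let_def singly_even_half)
qed

lemma singly_even_top_left:
  "i \<le> p \<Longrightarrow> j \<le> p \<Longrightarrow> singly_even n i j
      = siamese p i j + (if (i, j) \<in> swapT n then 3 else 0) * p\<^sup>2"
  by (simp add: singly_even_def singly_even_half singly_even_blockA)

lemma singly_even_bottom_left:
  "0 < i \<Longrightarrow> j \<le> p \<Longrightarrow> singly_even n (p + i) j
      = siamese p i j + (if (i, j) \<in> swapT n then 0 else 3) * p\<^sup>2"
  by (simp add: singly_even_def singly_even_half singly_even_blockA)

lemma singly_even_q: "(n - 6) div 4 = m - 1"
  using m by (simp add: n)

lemma singly_even_top_right: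
  "i \<le> p \<Longrightarrow> 0 < j \<Longrightarrow> singly_even n i (p + j)
      = siamese p i j + (if m + 3 \<le> j then 1 else 2) * p\<^sup>2"
  using m by (simp add: singly_even_def singly_even_half singly_even_q singly_even_blockA p)

lemma singly_even_bottom_right:
  "0 < i \<Longrightarrow> 0 < j \<Longrightarrow> singly_even n (p + i) (p + j)
      = siamese p i j + (if m + 3 \<le> j then 2 else 1) * p\<^sup>2"
  using m by (simp add: singly_even_def singly_even_half singly_even_q singly_even_blockA p)

lemma singly_even_diagonal_sum:
  "(\<Sum>i = 1..n. singly_even n i i) = 2 * (\<Sum>t<p. siamese p (t + 1) (t + 1)) + 3 * p * p\<^sup>2"
proof -
  have upper: "singly_even n (t + 1) (t + 1)
      = siamese p (t + 1) (t + 1) + (if t < m + 1 then 3 else 0) * p\<^sup>2"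
    if "t < p" for t
    using singly_even_top_left[of "t + 1" "t + 1"] that m by (simp add: singly_even_swapT_iff p)
  have lower: "singly_even n (p + t + 1) (p + t + 1)
      = siamese p (t + 1) (t + 1) + (if t < m + 2 then 1 else 2) * p\<^sup>2"
    if "t < p" for t
    using singly_even_bottom_right[of "t + 1" "t + 1"] by (simp add: add.assoc)
  have "(\<Sum>t<p. if t < m + 1 then 3 else 0) + (\<Sum>t<p. if t < m + 2 then 1 else 2) = (3 * p :: nat)"
    using m by (simp add: sum_lessThan_if_less p) arith
  then show ?thesis
    using sum_halves_weighted[of p "\<lambda>i. singly_even n i i", OF upper lower] by (simp add: n p)
qed

lemma singly_even_antidiagonal_sum:
  "(\<Sum>i = 1..n. singly_even n i (n - i + 1)) = 2 * (\<Sum>t<p. siamese p (t + 1) (p - t)) + 3 * p * p\<^sup>2"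
proof -
  have upper: "singly_even n (t + 1) (n - (t + 1) + 1)
      = siamese p (t + 1) (p - t) + (if t < m - 1 then 1 else 2) * p\<^sup>2"
    if "t < p" for t
  proof -
    have "n - (t + 1) + 1 = p + (p - t)" "m + 3 \<le> p - t \<longleftrightarrow> t < m - 1" using that m by (auto simp: n p)
    then show ?thesis using singly_even_top_right[of "t + 1" "p - t"] that by simp
  qed
  have lower: "singly_even n (p + t + 1) (n - (p + t + 1) + 1)
      = siamese p (t + 1) (p - t) + (if t < m then 3 else 0) * p\<^sup>2"
    if "t < p" for t
  proof -
    have "n - (p + t + 1) + 1 = p - t" using that by (simp add: n p)
    moreover have "(t + 1, p - t) \<in> swapT n \<longleftrightarrow> \<not> t < m" using that m by (auto simp: singly_even_swapT_iff p)
    ultimately show ?thesis using singly_even_bottom_left[of "t + 1" "p - t"] that by (simp add: add.assoc)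
  qed
  have "(\<Sum>t<p. if t < m - 1 then 1 else 2) + (\<Sum>t<p. if t < m then 3 else 0) = (3 * p :: nat)"
    using m by (simp add: sum_lessThan_if_less p)
  then show ?thesis
    using sum_halves_weighted[of p "\<lambda>i. singly_even n i (n - i + 1)", OF upper lower] by (simp add: n p)
qed

end


theorem mainTheorem7:
  fixes n :: nat
  assumes "n \<ge> 6" and "even n" and "\<not> 4 dvd n"
  shows "(\<Sum>i = 1..n. singly_even n i i) = n * (n\<^sup>2 + 1) div 2
       \<and> (\<Sum>i = 1..n. singly_even n i (n - i + 1)) = n * (n\<^sup>2 + 1) div 2"
proof -
  define m where "m = n div 4"
  define p where "p = 2 * m + 1"
  have n: "n = 4 * m + 2" and m: "1 \<le> m" using assms unfolding m_def by presburger+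
  have "odd p" by (simp add: p_def)
  have "n * (n\<^sup>2 + 1) = 2 * (p * (p\<^sup>2 + 1) + 3 * p * p\<^sup>2)"
    by (simp add: n p_def power2_eq_square algebra_simps)
  then show ?thesis
    using singly_even_diagonal_sum[OF m n p_def] singly_even_antidiagonal_sum[OF m n p_def]
      siamese_diagonal_sum[OF \<open>odd p\<close>] siamese_antidiagonal_sum[OF \<open>odd p\<close>]
    by simp
qed

end
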